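(* Let $A,B,H,K$ be events with $H\ne\emptyset$, $K\ne\emptyset$. For each coherent prevision assessment $(x,y,w)$ on $\{A|H,B|K,(A|H)\vee(B|K)\}$ there exists $\lambda\in[0,+\infty]$ such that, as random quantities, $(A|H)\vee(B|K)=S_\lambda(A|H,B|K)$.
   Context: Events are identified with their indicators; $\bar E$ is the negation of $E$. For $H\ne\emptyset$ the conditional event $E|H$ is true if $EH$ is true, false if $\bar EH$ is true, void if $\bar H$ is true; with $P(E|H)=x$ it is identified with the random quantity $EH+x\bar H$, and a conditional random quantity $X|H$ with prevision $\mu$ with $XH+\mu\bar H$. Coherence (de Finetti): an assessment $(\mu_1,\dots,\mu_m)$ on $\{X_1|H_1,\dots,X_m|H_m\}$ is coherent iff for all real stakes $s_i$ the gain $G=\sum_is_iH_i(X_i-\mu_i)$, restricted to $H_1\vee\dots\vee H_m$, satisfies $\min G\le0\le\max G$. Disjunction of two conditional events: given $P(A|H)=x$, $P(B|K)=y$ and $w=\mathbb P[((AH\vee BK)+x\bar H\bar BK+y\bar K\bar AH)|(H\vee K)]$, the disjunction $(A|H)\vee(B|K)$ equals $1$ if $AH\vee BK$ is true, $0$ if $\bar AH\bar BK$ is true, $x$ if $\bar H\bar BK$ is true, $y$ if $\bar AH\bar K$ is true, $w$ if $\bar H\bar K$ is true; its prevision is $w$. Frank t-norms $T_\lambda$, $\lambda\in[0,+\infty]$: $T_0(x,y)=\min\{x,y\}$, $T_1(x,y)=xy$, $T_{+\infty}(x,y)=\max\{x+y-1,0\}$, $T_\lambda(x,y)=\log_\lambda\big(1+\frac{(\lambda^x-1)(\lambda^y-1)}{\lambda-1}\big)$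 otherwise. Frank t-conorms: $S_\lambda(x,y)=1-T_\lambda(1-x,1-y)$. $S_\lambda(A|H,B|K)$ is obtained by applying $S_\lambda$ pointwise to the values of $A|H$ and $B|K$. *)

theory Defs
  imports "HOL-Analysis.Analysis"
begin

definition ind :: "'w set \<Rightarrow> 'w \<Rightarrow> real" where
  "ind E \<omega> = (if \<omega> \<in> E then 1 else 0)"

text \<open>Conditional event E|H with P(E|H)=x as the random quantity EH + x(not H).\<close>
definition cond_event :: "'w set \<Rightarrow> 'w set \<Rightarrow> real \<Rightarrow> 'w \<Rightarrow> real" where
  "cond_event E H x = (\<lambda>\<omega>. ind (E \<inter> H) \<omega> + x * ind (- H) \<omega>)"

text \<open>Coherence (de Finetti) of an assessment on a finite family of conditional
random quantities X_i|H_i with previsions mu_i, given as a list of triples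
(X_i, H_i, mu_i).\<close>
definition coherent :: "(('w \<Rightarrow> real) \<times> 'w set \<times> real) list \<Rightarrow> bool" where
  "coherent L \<longleftrightarrow>
     (\<forall>s :: nat \<Rightarrow> real.
        let G = (\<lambda>\<omega>. \<Sum>i<length L. s i * ind (fst (snd (L ! i))) \<omega>
                          * (fst (L ! i) \<omega> - snd (snd (L ! i))));
            U = (\<Union>i<length L. fst (snd (L ! i)))
        in (\<exists>\<omega>\<in>U. G \<omega> \<le> 0) \<and> (\<exists>\<omega>\<in>U. 0 \<le> G \<omega>))"

text \<open>The random quantity (AH or BK) + x (not H)(not B)K + y (not K)(not A)H,
whose conditional prevision given H or K is w.\<close>
definition disj_num :: "'w set \<Rightarrow> 'w set \<Rightarrow> 'w set \<Rightarrow> 'w set \<Rightarrow> real \<Rightarrow> real \<Rightarrow> 'w \<Rightarrow> real" where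
  "disj_num A H B K x y = (\<lambda>\<omega>. ind ((A \<inter> H) \<union> (B \<inter> K)) \<omega>
      + x * ind (- H \<inter> - B \<inter> K) \<omega> + y * ind (- K \<inter> - A \<inter> H) \<omega>)"

text \<open>The disjunction (A|H) or (B|K), with P(A|H)=x, P(B|K)=y and prevision w.\<close>
definition cond_disj :: "'w set \<Rightarrow> 'w set \<Rightarrow> 'w set \<Rightarrow> 'w set \<Rightarrow> real \<Rightarrow> real \<Rightarrow> real \<Rightarrow> 'w \<Rightarrow> real" where
  "cond_disj A H B K x y w = (\<lambda>\<omega>.
     if \<omega> \<in> (A \<inter> H) \<union> (B \<inter> K) then 1
     else if \<omega> \<in> (- A \<inter> H) \<inter> (- B \<inter> K) then 0
     else if \<omega> \<in> - H \<inter> (- B \<inter> K) then x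
     else if \<omega> \<in> (- A \<inter> H) \<inter> - K then y
     else w)"

definition frank_T :: "ereal \<Rightarrow> real \<Rightarrow> real \<Rightarrow> real" where
  "frank_T l a b =
     (if l = 0 then min a b
      else if l = 1 then a * b
      else if l = \<infinity> then max (a + b - 1) 0
      else (let r = real_of_ereal l in
            log r (1 + (r powr a - 1) * (r powr b - 1) / (r - 1))))"

definition frank_S :: "ereal \<Rightarrow> real \<Rightarrow> real \<Rightarrow> real" where
  "frank_S l a b = 1 - frank_T l (1 - a) (1 - b)"

end

theory Submission
  imports Defs
begin

(* By the separating hyperplane theorem, coherence means that the three gains have
zero mean under some probability concentrated on finitely many worlds of H \<union> K.
If that probability gives H (or K) mass zero, this forces w = x + y - x y, the product
t-conorm S\<^sub>1.  Otherwise x and y are conditional probabilities in [0,1], and pointwise bounds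
on the gains yield the Frechet bounds max x y \<le> w \<le> min (x + y) 1.  This is exactly the
range of S\<^sub>\<lambda>(x,y) over \<lambda> \<in> [0,\<infinity>]: for finite \<lambda> \<noteq> 1 the equation T\<^sub>\<lambda>(a,b) = c reads
(\<lambda>\<^sup>a - 1)(\<lambda>\<^sup>b - 1) = (\<lambda> - 1)(\<lambda>\<^sup>c - 1), and a root is found by the intermediate value theorem
between a point near 1 and a point near 0 or \<infinity>.  Every S\<^sub>\<lambda> agrees with the disjunction
wherever one of the two conditional events takes the value 0 or 1, so the S\<^sub>\<lambda> hitting w
coincides with (A|H) \<or> (B|K) everywhere. *)

lemma coherent_triple_gain:
  assumes "coherent [(X1, H1, m1), (X2, H2, m2), (X3, H3, m3)]"
  shows "\<exists>\<omega>\<in>H1 \<union> H2 \<union> H3. s1 * ind H1 \<omega> * (X1 \<omega> - m1) + s2 * ind H2 \<omega> * (X2 \<omega> - m2)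
           + s3 * ind H3 \<omega> * (X3 \<omega> - m3) \<le> 0"
proof -
  let ?L = "[(X1, H1, m1), (X2, H2, m2), (X3, H3, m3)]"
  have "\<exists>\<omega>\<in>(\<Union>i<Suc (Suc (Suc 0)). fst (snd (?L ! i))).
      (\<Sum>i<Suc (Suc (Suc 0)). [s1, s2, s3] ! i * ind (fst (snd (?L ! i))) \<omega>
        * (fst (?L ! i) \<omega> - snd (snd (?L ! i)))) \<le> 0"
    using assms unfolding coherent_def Let_def by (simp only: length_Cons list.size)
  then show ?thesis
    by (simp only: sum.lessThan_Suc lessThan_0 sum.empty)
      (simp only: lessThan_Suc lessThan_0 UN_insert UN_empty nth_Cons_0 nth_Cons_Suc fst_conv snd_conv
         Un_empty_right add_0 Un_commute Un_left_commute)
qed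

lemma finite_range_if_factors:
  assumes "finite (range \<pi>)" and "\<And>\<omega> \<omega>'. \<pi> \<omega> = \<pi> \<omega>' \<Longrightarrow> f \<omega> = f \<omega>'"
  shows "finite (range f)"
proof -
  have "f \<omega> = f (inv \<pi> (\<pi> \<omega>))" for \<omega>
    by (rule assms(2)) (simp add: f_inv_into_f)
  then have "range f \<subseteq> (\<lambda>z. f (inv \<pi> z)) ` range \<pi>"
    by blast
  then show ?thesis using assms(1) by (rule finite_subset[OF _ finite_imageI])
qed

lemma zero_in_convex_hull_if_no_positive_direction:
  fixes f :: "'w \<Rightarrow> 'a::euclidean_space"
  assumes "finite (f ` U)" and "\<And>a. \<exists>\<omega>\<in>U. inner a (f \<omega>) \<le> 0"
  shows "0 \<in> convex hull (f ` U)"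
proof (rule ccontr)
  assume "0 \<notin> convex hull (f ` U)"
  moreover have "closed (convex hull (f ` U))"
    using assms(1) by (simp add: compact_convex_hull finite_imp_compact compact_imp_closed)
  ultimately obtain a b where "0 < b" "\<forall>z\<in>convex hull (f ` U). b < inner a z"
    using separating_hyperplane_closed_0[OF convex_convex_hull] by blast
  moreover obtain \<omega> where "\<omega> \<in> U" "inner a (f \<omega>) \<le> 0" using assms(2) by blast
  ultimately show False using hull_subset[of "f ` U" convex] by force
qed

lemma convex_hull_image_weights:
  assumes "finite (f ` U)" and "z \<in> convex hull (f ` U)"
  obtains W p where "finite W" "W \<subseteq> U" "\<forall>\<omega>\<in>W. 0 \<le> p \<omega>" "sum p W = 1"
    "(\<Sum>\<omega>\<in>W. p \<omega> *\<^sub>R f \<omega>) = z"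
proof -
  obtain u where u: "\<forall>v\<in>f ` U. 0 \<le> u v" "sum u (f ` U) = 1" "(\<Sum>v\<in>f ` U. u v *\<^sub>R v) = z"
    using assms by (auto simp: convex_hull_finite)
  define g where "g = inv_into U f"
  have fg: "f (g v) = v" if "v \<in> f ` U" for v
    using that by (simp add: g_def f_inv_into_f)
  have inj: "inj_on g (f ` U)"
    by (rule inj_on_inverseI[where g = f]) (rule fg)
  have gU: "g ` f ` U \<subseteq> U"
    unfolding g_def by (auto intro: inv_into_into)
  have "sum (u \<circ> f) (g ` f ` U) = (\<Sum>v\<in>f ` U. u (f (g v)))"
    by (simp add: sum.reindex[OF inj])
  also have "\<dots> = 1"
    using u(2) by (simp add: fg)
  finally have sum1: "sum (u \<circ> f) (g ` f ` U) = 1" .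
  have "(\<Sum>\<omega>\<in>g ` f ` U. (u \<circ> f) \<omega> *\<^sub>R f \<omega>) = (\<Sum>v\<in>f ` U. u (f (g v)) *\<^sub>R f (g v))"
    by (simp add: sum.reindex[OF inj])
  also have "\<dots> = z"
    using u(3) by (simp add: fg)
  finally have mean: "(\<Sum>\<omega>\<in>g ` f ` U. (u \<circ> f) \<omega> *\<^sub>R f \<omega>) = z" .
  have "\<forall>\<omega>\<in>g ` f ` U. 0 \<le> (u \<circ> f) \<omega>"
    using u(1) fg by fastforce
  with sum1 mean gU assms(1) show ?thesis
    using that[of "g ` f ` U" "u \<circ> f"] by blast
qed

lemma coherent_disj_zero_mean_distribution:
  assumes "coherent [(ind A, H, x), (ind B, K, y), (disj_num A H B K x y, H \<union> K, w)]"
  obtains W p where "finite W" "W \<subseteq> H \<union> K" "\<forall>\<omega>\<in>W. 0 \<le> p \<omega>" "sum p W = 1"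
    "(\<Sum>\<omega>\<in>W. p \<omega> * (ind H \<omega> * (ind A \<omega> - x))) = 0"
    "(\<Sum>\<omega>\<in>W. p \<omega> * (ind K \<omega> * (ind B \<omega> - y))) = 0"
    "(\<Sum>\<omega>\<in>W. p \<omega> * disj_num A H B K x y \<omega>) = w"
proof -
  define v where "v \<omega> = (ind H \<omega> * (ind A \<omega> - x), ind K \<omega> * (ind B \<omega> - y),
    disj_num A H B K x y \<omega> - w)" for \<omega>
  have "finite (range v)"
  proof (rule finite_range_if_factors)
    show "finite (range (\<lambda>\<omega>. (\<omega> \<in> A, \<omega> \<in> B, \<omega> \<in> H, \<omega> \<in> K)))" by simp
  qed (auto simp: v_def disj_num_def ind_def)
  then have fin: "finite (v ` (H \<union> K))"
    by (rule finite_subset[rotated]) auto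
  have "\<exists>\<omega>\<in>H \<union> K. inner a (v \<omega>) \<le> 0" for a
  proof -
    obtain a1 a2 a3 where a: "a = (a1, a2, a3)" by (cases a) auto
    obtain \<omega> where "\<omega> \<in> H \<union> K" and "a1 * ind H \<omega> * (ind A \<omega> - x) + a2 * ind K \<omega> * (ind B \<omega> - y)
        + a3 * ind (H \<union> K) \<omega> * (disj_num A H B K x y \<omega> - w) \<le> 0"
      using coherent_triple_gain[OF assms, of a1 a2 a3] by auto
    moreover from \<open>\<omega> \<in> H \<union> K\<close> have "ind (H \<union> K) \<omega> = 1" by (simp add: ind_def)
    ultimately show ?thesis
      by (intro bexI[of _ \<omega>]) (simp_all add: a v_def algebra_simps)
  qed
  then have "0 \<in> convex hull (v ` (H \<union> K))"
    using zero_in_convex_hull_if_no_positive_direction[OF fin] by blast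
  then obtain W p where W: "finite W" "W \<subseteq> H \<union> K" "\<forall>\<omega>\<in>W. 0 \<le> p \<omega>" "sum p W = 1"
      and mean: "(\<Sum>\<omega>\<in>W. p \<omega> *\<^sub>R v \<omega>) = 0"
    using convex_hull_image_weights[OF fin] by blast
  from mean have "(\<Sum>\<omega>\<in>W. p \<omega> * (ind H \<omega> * (ind A \<omega> - x))) = 0"
      "(\<Sum>\<omega>\<in>W. p \<omega> * (ind K \<omega> * (ind B \<omega> - y))) = 0"
      "(\<Sum>\<omega>\<in>W. p \<omega> * (disj_num A H B K x y \<omega> - w)) = 0"
    by (simp_all add: v_def prod_eq_iff fst_sum snd_sum)
  moreover from W(4) have "(\<Sum>\<omega>\<in>W. p \<omega> * (disj_num A H B K x y \<omega> - w))
      = (\<Sum>\<omega>\<in>W. p \<omega> * disj_num A H B K x y \<omega>) - w"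
    by (simp add: right_diff_distrib sum_subtractf flip: sum_distrib_right)
  ultimately show ?thesis using W that by simp
qed

lemma weighted_mean_ge:
  fixes p f :: "'w \<Rightarrow> real"
  assumes "\<forall>\<omega>\<in>W. 0 \<le> p \<omega>" "sum p W = 1" "\<And>\<omega>. \<omega> \<in> W \<Longrightarrow> c \<le> f \<omega>"
  shows "c \<le> (\<Sum>\<omega>\<in>W. p \<omega> * f \<omega>)"
proof -
  have "c = (\<Sum>\<omega>\<in>W. p \<omega> * c)" using assms(2) by (simp flip: sum_distrib_right)
  also have "\<dots> \<le> (\<Sum>\<omega>\<in>W. p \<omega> * f \<omega>)"
    using assms(1,3) by (intro sum_mono mult_left_mono) auto
  finally show ?thesis .
qed

lemma weighted_mean_le:
  fixes p f :: "'w \<Rightarrow> real"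
  assumes "\<forall>\<omega>\<in>W. 0 \<le> p \<omega>" "sum p W = 1" "\<And>\<omega>. \<omega> \<in> W \<Longrightarrow> f \<omega> \<le> c"
  shows "(\<Sum>\<omega>\<in>W. p \<omega> * f \<omega>) \<le> c"
  using weighted_mean_ge[of W p "- c" "\<lambda>\<omega>. - f \<omega>"] assms by (simp add: sum_negf)

lemma disj_num_swap: "disj_num A H B K x y = disj_num B K A H y x"
  by (auto simp: fun_eq_iff disj_num_def ind_def)

lemma disj_prevision_if_null_condition:
  assumes "finite W" "W \<subseteq> H \<union> K" "\<forall>\<omega>\<in>W. 0 \<le> p \<omega>" "sum p W = 1"
    and null: "(\<Sum>\<omega>\<in>W. p \<omega> * ind H \<omega>) = 0"
    and B: "(\<Sum>\<omega>\<in>W. p \<omega> * (ind K \<omega> * (ind B \<omega> - y))) = 0"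
    and disj: "(\<Sum>\<omega>\<in>W. p \<omega> * disj_num A H B K x y \<omega>) = w"
  shows "w = x + y - x * y"
proof -
  have "\<forall>\<omega>\<in>W. p \<omega> * ind H \<omega> = 0"
    using null assms(1,3) by (subst sum_nonneg_eq_0_iff[symmetric]) (auto simp: ind_def)
  then have "p \<omega> * disj_num A H B K x y \<omega>
      = p \<omega> * (x + y - x * y) + (1 - x) * (p \<omega> * (ind K \<omega> * (ind B \<omega> - y)))" if "\<omega> \<in> W" for \<omega>
    using that assms(2) by (cases "p \<omega> = 0") (auto simp: disj_num_def ind_def algebra_simps)
  then have "w = (x + y - x * y) * sum p W + (1 - x) * (\<Sum>\<omega>\<in>W. p \<omega> * (ind K \<omega> * (ind B \<omega> - y)))"
    unfolding disj[symmetric] by (simp add: sum.distrib sum_distrib_left sum_distrib_right mult.commute)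
  then show ?thesis using assms(4) B by simp
qed

lemma cond_prevision_in_unit_interval:
  assumes "\<forall>\<omega>\<in>W. 0 \<le> p \<omega>" and pos: "0 < (\<Sum>\<omega>\<in>W. p \<omega> * ind H \<omega>)"
    and zero: "(\<Sum>\<omega>\<in>W. p \<omega> * (ind H \<omega> * (ind A \<omega> - x))) = 0"
  shows "0 \<le> x" "x \<le> 1"
proof -
  let ?PH = "\<Sum>\<omega>\<in>W. p \<omega> * ind H \<omega>" and ?PAH = "\<Sum>\<omega>\<in>W. p \<omega> * ind (A \<inter> H) \<omega>"
  have "p \<omega> * (ind H \<omega> * (ind A \<omega> - x)) = p \<omega> * ind (A \<inter> H) \<omega> - x * (p \<omega> * ind H \<omega>)" for \<omega>
    by (simp add: ind_def algebra_simps)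
  then have "?PAH = x * ?PH" using zero by (simp add: sum_subtractf sum_distrib_left)
  moreover have "0 \<le> ?PAH" "?PAH \<le> ?PH"
    using assms(1) by (auto intro!: sum_nonneg sum_mono mult_left_mono simp: ind_def)
  ultimately show "0 \<le> x" "x \<le> 1"
    using pos by (simp_all add: zero_le_mult_iff mult_le_cancel_right1)
qed

lemma disj_num_frechet_pointwise:
  assumes "\<omega> \<in> H \<union> K" "0 \<le> x" "x \<le> 1" "0 \<le> y" "y \<le> 1"
  shows "x \<le> disj_num A H B K x y \<omega> - ind H \<omega> * (ind A \<omega> - x)"
    and "y \<le> disj_num A H B K x y \<omega> - ind K \<omega> * (ind B \<omega> - y)"
    and "disj_num A H B K x y \<omega> - ind H \<omega> * (ind A \<omega> - x) - ind K \<omega> * (ind B \<omega> - y) \<le> x + y"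
    and "disj_num A H B K x y \<omega> \<le> 1"
  using assms by (auto simp: disj_num_def ind_def)

lemma disj_prevision_frechet_bounds:
  assumes "W \<subseteq> H \<union> K" "\<forall>\<omega>\<in>W. 0 \<le> p \<omega>" "sum p W = 1"
    and A: "(\<Sum>\<omega>\<in>W. p \<omega> * (ind H \<omega> * (ind A \<omega> - x))) = 0"
    and B: "(\<Sum>\<omega>\<in>W. p \<omega> * (ind K \<omega> * (ind B \<omega> - y))) = 0"
    and disj: "(\<Sum>\<omega>\<in>W. p \<omega> * disj_num A H B K x y \<omega>) = w"
    and "0 \<le> x" "x \<le> 1" "0 \<le> y" "y \<le> 1"
  shows "max x y \<le> w" "w \<le> min (x + y) 1"
proof -
  let ?mean = "\<lambda>f. \<Sum>\<omega>\<in>W. p \<omega> * f \<omega>"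
  let ?D = "disj_num A H B K x y" and ?G\<^sub>A = "\<lambda>\<omega>. ind H \<omega> * (ind A \<omega> - x)"
    and ?G\<^sub>B = "\<lambda>\<omega>. ind K \<omega> * (ind B \<omega> - y)"
  have mean_diff: "?mean (\<lambda>\<omega>. f \<omega> - g \<omega>) = ?mean f - ?mean g" for f g :: "'a \<Rightarrow> real"
    by (simp add: right_diff_distrib sum_subtractf)
  note pointwise = disj_num_frechet_pointwise[OF subsetD[OF assms(1)] assms(7-10)]
  have "x \<le> ?mean (\<lambda>\<omega>. ?D \<omega> - ?G\<^sub>A \<omega>)" "y \<le> ?mean (\<lambda>\<omega>. ?D \<omega> - ?G\<^sub>B \<omega>)"
    using pointwise(1,2) assms(2,3) by (auto intro: weighted_mean_ge)
  moreover have "?mean (\<lambda>\<omega>. ?D \<omega> - ?G\<^sub>A \<omega> - ?G\<^sub>B \<omega>) \<le> x + y" "?mean ?D \<le> 1"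
    using pointwise(3,4) assms(2,3) by (auto intro: weighted_mean_le)
  ultimately show "max x y \<le> w" "w \<le> min (x + y) 1"
    using A B disj by (simp_all add: mean_diff)
qed

lemma coherent_disj_prevision_cases:
  assumes "coherent [(ind A, H, x), (ind B, K, y), (disj_num A H B K x y, H \<union> K, w)]"
  shows "w = x + y - x * y \<or>
    (0 \<le> x \<and> x \<le> 1 \<and> 0 \<le> y \<and> y \<le> 1 \<and> max x y \<le> w \<and> w \<le> min (x + y) 1)"
proof -
  obtain W p where W: "finite W" "W \<subseteq> H \<union> K" "\<forall>\<omega>\<in>W. 0 \<le> p \<omega>" "sum p W = 1"
    and A: "(\<Sum>\<omega>\<in>W. p \<omega> * (ind H \<omega> * (ind A \<omega> - x))) = 0"
    and B: "(\<Sum>\<omega>\<in>W. p \<omega> * (ind K \<omega> * (ind B \<omega> - y))) = 0"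
    and disj: "(\<Sum>\<omega>\<in>W. p \<omega> * disj_num A H B K x y \<omega>) = w"
    using coherent_disj_zero_mean_distribution[OF assms] by blast
  have PH: "0 \<le> (\<Sum>\<omega>\<in>W. p \<omega> * ind H \<omega>)" and PK: "0 \<le> (\<Sum>\<omega>\<in>W. p \<omega> * ind K \<omega>)"
    using W(3) by (auto intro!: sum_nonneg simp: ind_def)
  consider "(\<Sum>\<omega>\<in>W. p \<omega> * ind H \<omega>) = 0" | "(\<Sum>\<omega>\<in>W. p \<omega> * ind K \<omega>) = 0"
    | "0 < (\<Sum>\<omega>\<in>W. p \<omega> * ind H \<omega>)" "0 < (\<Sum>\<omega>\<in>W. p \<omega> * ind K \<omega>)"
    using PH PK by linarith
  then show ?thesis
  proof cases
    case 1
    then show ?thesis using disj_prevision_if_null_condition[OF W 1 B disj] by blast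
  next
    case 2
    have "W \<subseteq> K \<union> H" using W(2) by blast
    moreover have "(\<Sum>\<omega>\<in>W. p \<omega> * disj_num B K A H y x \<omega>) = w"
      using disj by (simp add: disj_num_swap)
    ultimately have "w = y + x - y * x"
      using disj_prevision_if_null_condition[OF W(1) _ W(3,4) 2 A] by blast
    then show ?thesis by (simp add: algebra_simps)
  next
    case 3
    have "0 \<le> x" "x \<le> 1" "0 \<le> y" "y \<le> 1"
      using cond_prevision_in_unit_interval[OF W(3) 3(1) A]
        cond_prevision_in_unit_interval[OF W(3) 3(2) B] by auto
    then show ?thesis using disj_prevision_frechet_bounds[OF W(2-4) A B disj] by auto
  qed
qed

lemma powr_le_one_plus_mult:
  fixes t q :: real
  assumes "0 < t" "0 \<le> q" "q \<le> 1"
  shows "t powr q \<le> 1 + q * (t - 1)"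
proof -
  have "exp ((1 - q) *\<^sub>R 0 + q *\<^sub>R ln t) \<le> (1 - q) * exp 0 + q * exp (ln t)"
    using convex_onD[OF exp_convex, of q 0 "ln t"] assms by auto
  then show ?thesis using assms by (simp add: powr_def algebra_simps)
qed

lemma one_minus_powr_le:
  fixes r p :: real
  assumes "0 < r" "0 \<le> p" "p \<le> 1"
  shows "1 - r powr p \<le> p * r powr (p - 1) * (1 - r)"
proof -
  have "r powr (p - 1) * r powr (1 - p) \<le> r powr (p - 1) * (1 + (1 - p) * (r - 1))"
    using powr_le_one_plus_mult[of r "1 - p"] assms by (intro mult_left_mono) auto
  moreover have "r powr (p - 1) * r powr (1 - p) = 1"
    using assms by (simp flip: powr_add)
  moreover have "r powr (p - 1) * r = r powr p"
    using powr_mult_base[of r "p - 1"] assms by (simp add: mult.commute)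
  ultimately show ?thesis by (simp add: algebra_simps)
qed

definition frank_gap :: "real \<Rightarrow> real \<Rightarrow> real \<Rightarrow> real \<Rightarrow> real" where
  "frank_gap a b c r = (1 - r powr a) * (1 - r powr b) - (1 - r) * (1 - r powr c)"

lemma frank_T_ereal:
  assumes "0 < r" "r \<noteq> 1"
  shows "frank_T (ereal r) a b = log r (1 + (r powr a - 1) * (r powr b - 1) / (r - 1))"
  using assms by (simp add: frank_T_def)

lemma frank_T_eq_if_gap_zero:
  assumes "0 < r" "r \<noteq> 1" "frank_gap a b c r = 0"
  shows "frank_T (ereal r) a b = c"
proof -
  have "(r powr a - 1) * (r powr b - 1) = (r - 1) * (r powr c - 1)"
    using assms(3) unfolding frank_gap_def by (simp add: algebra_simps)
  then have "(r powr a - 1) * (r powr b - 1) / (r - 1) = r powr c - 1"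
    using assms(2) by simp
  then show ?thesis using assms by (simp add: frank_T_ereal)
qed

lemma frank_gap_zero_between:
  assumes "0 < r\<^sub>1" "0 < r\<^sub>2" "0 < frank_gap a b c r\<^sub>1" "frank_gap a b c r\<^sub>2 < 0"
  shows "\<exists>r. min r\<^sub>1 r\<^sub>2 \<le> r \<and> r \<le> max r\<^sub>1 r\<^sub>2 \<and> frank_gap a b c r = 0"
proof -
  have cont: "continuous_on {u..v} (frank_gap a b c)" if "0 < u" for u v
    unfolding frank_gap_def using that by (intro continuous_intros) auto
  show ?thesis
  proof (cases "r\<^sub>1 \<le> r\<^sub>2")
    case True
    then show ?thesis
      using IVT2'[of "frank_gap a b c" r\<^sub>2 0 r\<^sub>1] cont[of r\<^sub>1 r\<^sub>2] assms by force
  next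
    case False
    then show ?thesis
      using IVT'[of "frank_gap a b c" r\<^sub>2 0 r\<^sub>1] cont[of r\<^sub>2 r\<^sub>1] assms by force
  qed
qed

lemma frank_gap_le_below_one:
  assumes "0 < r" "r < 1" "0 \<le> a" "a \<le> 1" "0 \<le> b" "b \<le> 1" "0 \<le> c" "c \<le> 1"
  shows "frank_gap a b c r \<le> (1 - r)\<^sup>2 * (a * b * r powr (a + b - 2) - c)"
proof -
  have "(1 - r powr a) * (1 - r powr b) \<le> (a * r powr (a - 1) * (1 - r)) * (b * r powr (b - 1) * (1 - r))"
    using one_minus_powr_le[of r a] one_minus_powr_le[of r b] assms
    by (intro mult_mono) (auto simp: powr_le1)
  also have "\<dots> = (1 - r)\<^sup>2 * (a * b * r powr (a + b - 2))"
    using assms(1) by (simp add: power2_eq_square powr_add[symmetric] algebra_simps)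
  finally have "(1 - r powr a) * (1 - r powr b) \<le> (1 - r)\<^sup>2 * (a * b * r powr (a + b - 2))" .
  moreover have "c * (1 - r) \<le> 1 - r powr c"
    using powr_le_one_plus_mult[of r c] assms by (simp add: algebra_simps)
  then have "(1 - r)\<^sup>2 * c \<le> (1 - r) * (1 - r powr c)"
    using assms(2) mult_left_mono[of "c * (1 - r)" "1 - r powr c" "1 - r"]
    by (simp add: power2_eq_square algebra_simps)
  ultimately show ?thesis unfolding frank_gap_def by (simp add: algebra_simps)
qed

lemma frank_gap_ge_above_one:
  assumes "1 < r" "0 \<le> a" "a \<le> 1" "0 \<le> b" "b \<le> 1" "0 \<le> c" "c \<le> 1"
  shows "(r - 1)\<^sup>2 * (a * b * r powr (a + b - 2) - c) \<le> frank_gap a b c r"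
proof -
  have "(r - 1)\<^sup>2 * (a * b * r powr (a + b - 2)) = (a * r powr (a - 1) * (r - 1)) * (b * r powr (b - 1) * (r - 1))"
    using assms(1) by (simp add: power2_eq_square powr_add[symmetric] algebra_simps)
  also have "\<dots> \<le> (r powr a - 1) * (r powr b - 1)"
  proof (rule mult_mono)
    show "a * r powr (a - 1) * (r - 1) \<le> r powr a - 1" "b * r powr (b - 1) * (r - 1) \<le> r powr b - 1"
      using one_minus_powr_le[of r a] one_minus_powr_le[of r b] assms by (simp_all add: algebra_simps)
    show "0 \<le> r powr a - 1" "0 \<le> b * r powr (b - 1) * (r - 1)"
      using assms ge_one_powr_ge_zero[of r a] by simp_all
  qed
  finally have "(r - 1)\<^sup>2 * (a * b * r powr (a + b - 2)) \<le> (1 - r powr a) * (1 - r powr b)"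
    by (simp add: algebra_simps)
  moreover have "r powr c - 1 \<le> c * (r - 1)"
    using powr_le_one_plus_mult[of r c] assms by (simp add: algebra_simps)
  then have "(r - 1) * (r powr c - 1) \<le> (r - 1)\<^sup>2 * c"
    using assms(1) mult_left_mono[of "r powr c - 1" "c * (r - 1)" "r - 1"]
    by (simp add: power2_eq_square algebra_simps)
  ultimately show ?thesis unfolding frank_gap_def by (simp add: algebra_simps)
qed

(* r is chosen with r powr (a + b - 2) halfway between 1 and c / (a b), so that the bounds
   of frank_gap_le_below_one and frank_gap_ge_above_one have the strict sign of a b - c. *)
lemma frank_gap_near_one:
  fixes a b c :: real
  assumes "0 < a" "a < 1" "0 < b" "b < 1" "0 \<le> c"
  defines "r \<equiv> (2 * a * b / (a * b + c)) powr (1 / (2 - a - b))"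
  shows "0 < r" "a * b * r powr (a + b - 2) - c = (a * b - c) / 2"
    "a * b < c \<Longrightarrow> r < 1" "c < a * b \<Longrightarrow> 1 < r"
proof -
  define s where "s = 2 * a * b / (a * b + c)"
  have ab: "0 < a * b" using assms by simp
  then have s: "0 < s" unfolding s_def using assms(5) by simp
  have e: "0 < 1 / (2 - a - b)" using assms by simp
  show "0 < r" unfolding r_def s_def[symmetric] using s by simp
  have "1 / (2 - a - b) * (a + b - 2) = - 1"
    using assms(2,4) by (simp add: field_simps)
  then have "r powr (a + b - 2) = s powr (- 1)"
    unfolding r_def s_def[symmetric] by (simp only: powr_powr)
  then show "a * b * r powr (a + b - 2) - c = (a * b - c) / 2"
    using s assms(1,3,5) by (simp add: powr_minus_divide s_def field_simps)
  show "r < 1" if "a * b < c"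
  proof -
    have "s < 1" using that ab unfolding s_def by (simp add: field_simps)
    then show ?thesis unfolding r_def s_def[symmetric] using powr_less_mono2[OF e, of s 1] s by simp
  qed
  show "1 < r" if "c < a * b"
  proof -
    have "1 < s" using that ab assms(5) unfolding s_def by (simp add: field_simps)
    then show ?thesis unfolding r_def s_def[symmetric] using e by simp
  qed
qed

lemma frank_gap_neg_near_one_below:
  assumes "0 < a" "a < 1" "0 < b" "b < 1" "a * b < c" "c \<le> 1"
  shows "\<exists>r. 0 < r \<and> r < 1 \<and> frank_gap a b c r < 0"
proof -
  have "0 \<le> c" using assms mult_pos_pos[of a b] by linarith
  let ?r = "(2 * a * b / (a * b + c)) powr (1 / (2 - a - b))"
  note near = frank_gap_near_one[OF assms(1-4) \<open>0 \<le> c\<close>]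
  have r: "0 < ?r" "?r < 1" using near(1) near(3)[OF assms(5)] .
  have "frank_gap a b c ?r \<le> (1 - ?r)\<^sup>2 * ((a * b - c) / 2)"
    using frank_gap_le_below_one[OF r, of a b c] near(2) assms \<open>0 \<le> c\<close> by simp
  also have "\<dots> < 0"
    using r assms(5) by (intro mult_pos_neg) auto
  finally show ?thesis using r by blast
qed

lemma frank_gap_pos_near_one_above:
  assumes "0 < a" "a < 1" "0 < b" "b < 1" "0 \<le> c" "c < a * b"
  shows "\<exists>r. 1 < r \<and> 0 < frank_gap a b c r"
proof -
  have "c \<le> 1" using assms mult_strict_mono[of a 1 b 1] by simp
  let ?r = "(2 * a * b / (a * b + c)) powr (1 / (2 - a - b))"
  note near = frank_gap_near_one[OF assms(1-5)]
  have r: "1 < ?r" using near(4)[OF assms(6)] .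
  have "0 < (?r - 1)\<^sup>2 * ((a * b - c) / 2)"
    using r assms(6) by simp
  also have "\<dots> \<le> frank_gap a b c ?r"
    using frank_gap_ge_above_one[OF r, of a b c] near(2) assms \<open>c \<le> 1\<close> by simp
  finally show ?thesis using r by blast
qed

lemma frank_gap_pos_near_zero:
  assumes "0 < c" "c < min a b"
  shows "\<exists>r. 0 < r \<and> r < 1 \<and> 0 < frank_gap a b c r"
proof -
  define d where "d = min a b - c"
  define r where "r = (1 / 4) powr (1 / d)"
  have d: "0 < d" using assms(2) by (simp add: d_def)
  have r: "0 < r" "r < 1" unfolding r_def using d powr_less_mono2[of "1 / d" "1 / 4" 1] by auto
  have rd: "r powr d = 1 / 4" unfolding r_def using d by (simp add: powr_powr)
  have small: "r powr e \<le> r powr c / 4" if "c + d \<le> e" for e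
  proof -
    have "r powr (e - c) \<le> r powr d" using that r by (intro powr_mono') auto
    then show ?thesis using r rd by (simp add: powr_diff field_simps)
  qed
  have "r powr c / 2 \<le> 1 - r powr a - r powr b - (1 - r powr c)"
    using small[of a] small[of b] d_def by simp
  also have "\<dots> \<le> (1 - r powr a) * (1 - r powr b) - (1 - r powr c)"
    by (simp add: algebra_simps)
  also have "\<dots> \<le> frank_gap a b c r"
    unfolding frank_gap_def
    using mult_left_le_one_le[of "1 - r powr c" "1 - r"] r powr_le1[of c r] assms(1) by simp
  finally have "r powr c / 2 \<le> frank_gap a b c r" .
  moreover have "0 < r powr c / 2" using r by simp
  ultimately have "0 < frank_gap a b c r" by linarith
  then show ?thesis using r by blast
qed

lemma frank_gap_neg_near_infinity:
  assumes "0 < c" "a + b < c + 1"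
  shows "\<exists>r. 1 < r \<and> frank_gap a b c r < 0"
proof -
  define d where "d = min (c + 1 - a - b) (min c 1)"
  define r where "r = 3 powr (1 / d)"
  have d: "0 < d" "d \<le> 1" using assms by (auto simp: d_def)
  have "3 powr 1 \<le> r" unfolding r_def using d by (intro powr_mono) (auto simp: field_simps)
  then have r: "3 \<le> r" by simp
  have rd: "r powr d = 3" unfolding r_def using d by (simp add: powr_powr)
  have large: "3 * r powr e \<le> r powr (c + 1)" if "e + d \<le> c + 1" for e
  proof -
    have "r powr d \<le> r powr (c + 1 - e)" using that r by (intro powr_mono) auto
    then show ?thesis using r rd by (simp add: powr_diff field_simps)
  qed
  have "a + b + d \<le> c + 1" "1 + d \<le> c + 1" "c + d \<le> c + 1"
    by (auto simp: d_def)
  note large = large[OF this(1)] large[OF this(2)] large[OF this(3)]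
  have "frank_gap a b c r = r powr (a + b) + r powr 1 + r powr c - r powr (c + 1) - r powr a - r powr b"
    unfolding frank_gap_def using r by (simp add: powr_add algebra_simps)
  also have "\<dots> < 0"
  proof -
    have "0 < r powr a" "0 < r powr b" using r by simp_all
    then show ?thesis using large by linarith
  qed
  finally show ?thesis using r by (intro exI[of _ r]) auto
qed

lemma frank_gap_zero_below_one:
  assumes "0 < a" "a < 1" "0 < b" "b < 1" "a * b < c" "c < min a b"
  shows "\<exists>r. 0 < r \<and> r < 1 \<and> frank_gap a b c r = 0"
proof -
  have "0 < c" using assms mult_pos_pos[of a b] by linarith
  obtain r\<^sub>1 where "0 < r\<^sub>1" "r\<^sub>1 < 1" "0 < frank_gap a b c r\<^sub>1"
    using frank_gap_pos_near_zero[OF \<open>0 < c\<close> assms(6)] by blast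
  moreover obtain r\<^sub>2 where "0 < r\<^sub>2" "r\<^sub>2 < 1" "frank_gap a b c r\<^sub>2 < 0"
    using frank_gap_neg_near_one_below[OF assms(1-5)] assms(2,6) by auto
  moreover from calculation obtain r where "min r\<^sub>1 r\<^sub>2 \<le> r" "r \<le> max r\<^sub>1 r\<^sub>2" "frank_gap a b c r = 0"
    using frank_gap_zero_between[of r\<^sub>1 r\<^sub>2 a b c] by blast
  ultimately show ?thesis by (intro exI[of _ r]) auto
qed

lemma frank_gap_zero_above_one:
  assumes "0 < a" "a < 1" "0 < b" "b < 1" "max (a + b - 1) 0 < c" "c < a * b"
  shows "\<exists>r. 1 < r \<and> frank_gap a b c r = 0"
proof -
  obtain r\<^sub>1 where "1 < r\<^sub>1" "0 < frank_gap a b c r\<^sub>1"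
    using frank_gap_pos_near_one_above[OF assms(1-4) _ assms(6)] assms(5) by auto
  moreover obtain r\<^sub>2 where "1 < r\<^sub>2" "frank_gap a b c r\<^sub>2 < 0"
    using frank_gap_neg_near_infinity[of c a b] assms(5) by auto
  moreover from calculation obtain r where "min r\<^sub>1 r\<^sub>2 \<le> r" "frank_gap a b c r = 0"
    using frank_gap_zero_between[of r\<^sub>1 r\<^sub>2 a b c] by auto
  ultimately show ?thesis by (intro exI[of _ r]) auto
qed

lemma frank_bounds_collapse_on_boundary:
  fixes a b :: real
  assumes "0 \<le> a" "a \<le> 1" "0 \<le> b" "b \<le> 1" "a \<in> {0, 1} \<or> b \<in> {0, 1}"
  shows "min a b = a * b" "max (a + b - 1) 0 = a * b"
  using assms by auto

lemma frank_T_attains: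
  assumes "0 \<le> a" "a \<le> 1" "0 \<le> b" "b \<le> 1" "max (a + b - 1) 0 \<le> c" "c \<le> min a b"
  shows "\<exists>l\<ge>0. frank_T l a b = c"
proof -
  have interior: "0 < a \<and> a < 1 \<and> 0 < b \<and> b < 1"
    if "min a b \<noteq> a * b \<or> max (a + b - 1) 0 \<noteq> a * b"
    using frank_bounds_collapse_on_boundary[OF assms(1-4)] that assms(1-4) by force
  consider "c = a * b" | "c = min a b" | "c = max (a + b - 1) 0"
    | "a * b < c" "c < min a b" | "max (a + b - 1) 0 < c" "c < a * b"
    using assms(5,6) by linarith
  then show ?thesis
  proof cases
    case 1
    then show ?thesis by (intro exI[of _ 1]) (simp add: frank_T_def)
  next
    case 2
    then show ?thesis by (intro exI[of _ 0]) (simp add: frank_T_def)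
  next
    case 3
    then show ?thesis by (intro exI[of _ \<infinity>]) (simp add: frank_T_def)
  next
    case 4
    then obtain r where "0 < r" "r < 1" "frank_gap a b c r = 0"
      using frank_gap_zero_below_one interior by fastforce
    then show ?thesis using frank_T_eq_if_gap_zero by (intro exI[of _ "ereal r"]) auto
  next
    case 5
    then obtain r where "1 < r" "frank_gap a b c r = 0"
      using frank_gap_zero_above_one interior by fastforce
    then show ?thesis using frank_T_eq_if_gap_zero by (intro exI[of _ "ereal r"]) auto
  qed
qed

lemma frank_S_attains:
  assumes "0 \<le> x" "x \<le> 1" "0 \<le> y" "y \<le> 1" "max x y \<le> w" "w \<le> min (x + y) 1"
  shows "\<exists>l\<ge>0. frank_S l x y = w"
proof -
  obtain l where "0 \<le> l" "frank_T l (1 - x) (1 - y) = 1 - w"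
    using frank_T_attains[of "1 - x" "1 - y" "1 - w"] assms by auto
  then show ?thesis by (auto simp: frank_S_def)
qed

lemma frank_T_boundary:
  assumes "0 \<le> l" "0 \<le> t" "t \<le> 1"
  shows "frank_T l t 0 = 0" "frank_T l 0 t = 0" "frank_T l t 1 = t" "frank_T l 1 t = t"
proof -
  consider "l = 0" | "l = 1" | "l = \<infinity>" | r where "l = ereal r" "0 < r" "r \<noteq> 1"
    using assms(1) by (cases l) (auto simp: le_less)
  then have "frank_T l t 0 = 0 \<and> frank_T l 0 t = 0 \<and> frank_T l t 1 = t \<and> frank_T l 1 t = t"
    by cases (use assms(2,3) in \<open>simp_all add: frank_T_def\<close>)
  then show "frank_T l t 0 = 0" "frank_T l 0 t = 0" "frank_T l t 1 = t" "frank_T l 1 t = t"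
    by simp_all
qed

lemma frank_S_boundary:
  assumes "0 \<le> l" "0 \<le> t" "t \<le> 1"
  shows "frank_S l t 1 = 1" "frank_S l 1 t = 1" "frank_S l t 0 = t" "frank_S l 0 t = t"
  using frank_T_boundary[of l "1 - t"] assms by (simp_all add: frank_S_def)

lemma frank_S_product: "frank_S 1 a b = a + b - a * b"
  by (simp add: frank_S_def frank_T_def algebra_simps)

lemma cond_disj_eq_pointwise:
  assumes "S 1 0 = 1" "S 1 1 = 1" "S 1 y = 1" "S 0 1 = 1" "S x 1 = 1"
    "S 0 0 = 0" "S x 0 = x" "S 0 y = y" "S x y = w"
  shows "cond_disj A H B K x y w \<omega> = S (cond_event A H x \<omega>) (cond_event B K y \<omega>)"
  using assms by (auto simp: cond_disj_def cond_event_def ind_def)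

theorem theorem16:
  fixes A B H K :: "'w set" and x y w :: real
  assumes "H \<noteq> {}" and "K \<noteq> {}"
    and "coherent [(ind A, H, x), (ind B, K, y), (disj_num A H B K x y, H \<union> K, w)]"
  shows "\<exists>l::ereal. 0 \<le> l \<and>
           (\<forall>\<omega>. cond_disj A H B K x y w \<omega>
                = frank_S l (cond_event A H x \<omega>) (cond_event B K y \<omega>))"
proof -
  consider (product) "w = x + y - x * y"
    | (frechet) "0 \<le> x" "x \<le> 1" "0 \<le> y" "y \<le> 1" "max x y \<le> w" "w \<le> min (x + y) 1"
    using coherent_disj_prevision_cases[OF assms(3)] by blast
  then show ?thesis
  proof cases
    case product
    then show ?thesis
      by (intro exI[of _ 1] conjI allI cond_disj_eq_pointwise) (simp_all add: frank_S_product)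
  next
    case frechet
    then obtain l where "0 \<le> l" "frank_S l x y = w"
      using frank_S_attains by blast
    then show ?thesis
      using frank_S_boundary[OF \<open>0 \<le> l\<close>] frechet
      by (intro exI[of _ l] conjI allI cond_disj_eq_pointwise) auto
  qed
qed

end
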